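(* Let $k\ge 2$ be an integer and let $\mathcal H_{k\text{-word}}$ be the class of $k$-word-representable graphs. Then for every $p\in[0,1]$, $$\mathrm{ed}_{\mathcal H_{k\text{-word}}}(p)=\min\{p,\;1-p\}.$$ Consequently $\max\{\mathrm{dist}(G,\mathcal H_{k\text{-word}}) : |V(G)|=n\}=\tfrac12-o(1)$ as $n\to\infty$. Moreover, for every $\epsilon>0$ and every graph $G$ on $n\ge2$ vertices, if $\mathrm{dist}(G,\mathcal H_{k\text{-word}})\ge\tfrac12-\epsilon$, then $|E(G)|/\binom n2\in[\tfrac12-\epsilon,\tfrac12+\epsilon]$.
   Context: A word over an alphabet $V$ represents a graph $G=(V,E)$ if for all distinct $x,y\in V$: $xy\in E$ if and only if the occurrences of $x$ and $y$ alternate in the word. $G$ is $k$-word-representable if it is represented by a word in which every letter of $V$ occurs exactly $k$ times; $\mathcal H_{k\text{-word}}$ is the (hereditary) class of such graphs. For graphs $G,H$ on the same $n$-vertex set, $\mathrm{dist}(G,H)=|E(G)\triangle E(H)|/\binom n2$. For a hereditary property $\mathcal H$, $\mathrm{dist}(G,\mathcal H)=\min\{\mathrm{dist}(G,H): H\in\mathcal H,\ V(H)=V(G)\}$, and $\mathrm{ed}_{\mathcal H}(p)=\lim_{n\to\infty}\max\{\mathrm{dist}(G,\mathcal H): |V(G)|=n,\ |E(G)|=\lfloor p\binom n2\rfloor\}$ (the limit exists). *)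

theory Defs
  imports Complex_Main
begin

definition all_edges :: "nat \<Rightarrow> nat set set" where
  "all_edges n = {{x, y} | x y. x < n \<and> y < n \<and> x \<noteq> y}"

definition is_graph :: "nat \<Rightarrow> nat set set \<Rightarrow> bool" where
  "is_graph n E \<longleftrightarrow> E \<subseteq> all_edges n"

definition alternate :: "nat list \<Rightarrow> nat \<Rightarrow> nat \<Rightarrow> bool" where
  "alternate w x y \<longleftrightarrow>
     (let u = filter (\<lambda>c. c = x \<or> c = y) w in
      \<forall>i. Suc i < length u \<longrightarrow> u ! i \<noteq> u ! Suc i)"

definition word_represents :: "nat list \<Rightarrow> nat \<Rightarrow> nat set set \<Rightarrow> bool" where
  "word_represents w n E \<longleftrightarrow> set w \<subseteq> {0..<n} \<and>
     (\<forall>x<n. \<forall>y<n. x \<noteq> y \<longrightarrow> ({x, y} \<in> E \<longleftrightarrow> alternate w x y))"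

definition k_word_representable :: "nat \<Rightarrow> nat \<Rightarrow> nat set set \<Rightarrow> bool" where
  "k_word_representable k n E \<longleftrightarrow>
     (\<exists>w. word_represents w n E \<and> (\<forall>v<n. count_list w v = k))"

definition gdist :: "nat \<Rightarrow> nat set set \<Rightarrow> nat set set \<Rightarrow> real" where
  "gdist n G H = real (card (G - H \<union> (H - G))) / real (n choose 2)"

definition dist_kword :: "nat \<Rightarrow> nat \<Rightarrow> nat set set \<Rightarrow> real" where
  "dist_kword k n G = Min {gdist n G H | H. is_graph n H \<and> k_word_representable k n H}"

definition max_dist_density :: "nat \<Rightarrow> real \<Rightarrow> nat \<Rightarrow> real" where
  "max_dist_density k p n =
     Max {dist_kword k n G | G. is_graph n G \<and> card G = nat \<lfloor>p * real (n choose 2)\<rfloor>}"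

definition max_dist :: "nat \<Rightarrow> nat \<Rightarrow> real" where
  "max_dist k n = Max {dist_kword k n G | G. is_graph n G}"

end

theory Submission
  imports Defs "HOL-Real_Asymp.Real_Asymp"
begin

(* The empty graph, represented by 0^k 1^k ... (n-1)^k when k >= 2, and the complete graph,
   represented by (0 1 ... (n-1))^k, are k-word-representable; hence every graph of edge density p
   is within min(p, 1 - p) of the class.

   Conversely, a k-word-representable graph on n vertices is determined by a word of length k n,
   so there are at most n^(k n) = exp(O(n log n)) of them. For a fixed graph H, comparing consecutive
   hypergeometric terms shows that at most a fraction (m + 1) exp(-Omega(N)) of the m-edge graphs G
   (N = C(n,2)) satisfy |G \<inter> H| >= |G| |H| / N + o(N). A union bound over all H then yields an m-edge
   graph G with |G \<triangle> H| = |G| + |H| - 2 |G \<inter> H| >= min(m, N - m) - o(N) for every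
   k-word-representable H. *)

lemma all_edges_eq: "all_edges n = {X. X \<subseteq> {0..<n} \<and> card X = 2}"
  unfolding all_edges_def by (auto simp: card_2_iff) blast

lemma finite_all_edges: "finite (all_edges n)"
  by (simp add: all_edges_eq)

lemma card_all_edges: "card (all_edges n) = n choose 2"
  using n_subsets[of "{0..<n}" 2] by (simp add: all_edges_eq)

lemma card_graph_le: "is_graph n G \<Longrightarrow> card G \<le> n choose 2"
  unfolding is_graph_def by (metis card_all_edges card_mono finite_all_edges)

lemma real_choose_two: "real (n choose 2) = real n * (real n - 1) / 2"
proof -
  have "2 * (n choose 2) = n * (n - 1)"
    unfolding choose_two by (cases "even n") auto
  then have "2 * real (n choose 2) = real n * real (n - 1)"
    by (metis of_nat_mult of_nat_numeral)
  then show ?thesis by (cases n) auto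
qed

lemma card_sym_diff:
  assumes "finite G" "finite H"
  shows "card (G - H \<union> (H - G)) + 2 * card (G \<inter> H) = card G + card H"
proof -
  have "card (G - H \<union> (H - G)) = card (G - H) + card (H - G)"
    by (rule card_Un_disjoint) (use assms in auto)
  then show ?thesis
    using card_Int_Diff[OF assms(1), of H] card_Int_Diff[OF assms(2), of G] by (simp add: Int_commute)
qed

section \<open>Two representing words\<close>

definition cyclic_word :: "nat \<Rightarrow> nat \<Rightarrow> nat list" where
  "cyclic_word k n = concat (replicate k [0..<n])"

definition block_word :: "nat \<Rightarrow> nat \<Rightarrow> nat list" where
  "block_word k n = concat (map (replicate k) [0..<n])"

lemma set_cyclic_word: "set (cyclic_word k n) \<subseteq> {0..<n}"
  unfolding cyclic_word_def by (cases k) auto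

lemma set_block_word: "set (block_word k n) \<subseteq> {0..<n}"
  unfolding block_word_def by auto

lemma count_list_cyclic_word: "v < n \<Longrightarrow> count_list (cyclic_word k n) v = k"
proof -
  assume "v < n"
  then have "count_list [0..<n] v = 1" by (induction n) auto
  then show ?thesis unfolding cyclic_word_def by (induction k) auto
qed

lemma count_list_block_word: "v < n \<Longrightarrow> count_list (block_word k n) v = k"
proof (induction n)
  case (Suc n)
  have "count_list (replicate k n) v = (if n = v then k else 0)" by (induction k) auto
  with Suc show ?case
    by (cases "v = n") (auto simp: block_word_def count_list_0_iff)
qed simp

lemma filter_upt_two:
  assumes "a < b" "b < n"
  shows "filter (\<lambda>c. c = a \<or> c = b) [0..<n] = [a, b]"
  by (rule sorted_distinct_set_unique) (use assms in \<open>auto intro: sorted_wrt_filter\<close>)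

lemma nth_concat_replicate_pair:
  "i < 2 * k \<Longrightarrow> concat (replicate k [a, b]) ! i = (if even i then a else b)"
proof (induction k arbitrary: i)
  case (Suc k)
  show ?case
  proof (cases "i < 2")
    case True
    then show ?thesis by (cases i) (auto simp: nth_append)
  next
    case False
    then have "concat (replicate (Suc k) [a, b]) ! i = concat (replicate k [a, b]) ! (i - 2)"
      by (simp add: nth_Cons' numeral_2_eq_2)
    then show ?thesis using Suc False by auto
  qed
qed simp

lemma alternate_cyclic_word:
  assumes "x < n" "y < n" "x \<noteq> y"
  shows "alternate (cyclic_word k n) x y"
proof -
  define a b where "a = min x y" and "b = max x y"
  have ab: "a < b" "b < n" "(\<lambda>c. c = x \<or> c = y) = (\<lambda>c. c = a \<or> c = b)"
    using assms by (auto simp: a_def b_def)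
  have "filter (\<lambda>c. c = x \<or> c = y) (cyclic_word k n) = concat (replicate k [a, b])"
    unfolding cyclic_word_def ab(3) by (induction k) (simp_all add: filter_upt_two[OF ab(1,2)])
  moreover have "length (concat (replicate k [a, b])) = 2 * k" by (induction k) auto
  ultimately show ?thesis
    using ab(1) unfolding alternate_def Let_def by (auto simp: nth_concat_replicate_pair)
qed

lemma not_alternate_block_word:
  assumes "x < n" "y < n" "x \<noteq> y" "k \<ge> 2"
  shows "\<not> alternate (block_word k n) x y"
proof -
  define a where "a = min x y"
  define P where "P c \<longleftrightarrow> c = x \<or> c = y" for c
  have "a < n" "P a" using assms by (auto simp: a_def P_def)
  then have "[0..<n] = [0..<a] @ a # [Suc a..<n]"
    by (metis upt_add_eq_append upt_conv_Cons le_add1 le_add_diff_inverse less_imp_le zero_le)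
  moreover have "filter P (concat (map (replicate k) [0..<a])) = []"
    by (auto simp: filter_empty_conv P_def a_def)
  ultimately have "filter P (block_word k n) = replicate k a @ filter P (concat (map (replicate k) [Suc a..<n]))"
    using \<open>P a\<close> unfolding block_word_def by (simp add: filter_replicate)
  then show ?thesis
    using assms(4) unfolding alternate_def Let_def P_def[abs_def]
    by (auto intro!: exI[of _ 0] simp: nth_append)
qed

lemma k_word_representable_all_edges: "k_word_representable k n (all_edges n)"
  unfolding k_word_representable_def word_represents_def
  using set_cyclic_word count_list_cyclic_word alternate_cyclic_word
  by (intro exI[of _ "cyclic_word k n"]) (auto simp: all_edges_def)

lemma k_word_representable_empty: "k \<ge> 2 \<Longrightarrow> k_word_representable k n {}"
  unfolding k_word_representable_def word_represents_def
  using set_block_word count_list_block_word not_alternate_block_word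
  by (intro exI[of _ "block_word k n"]) auto

definition kword_graphs :: "nat \<Rightarrow> nat \<Rightarrow> nat set set set" where
  "kword_graphs k n = {H. is_graph n H \<and> k_word_representable k n H}"

lemma empty_in_kword_graphs: "k \<ge> 2 \<Longrightarrow> {} \<in> kword_graphs k n"
  by (simp add: kword_graphs_def is_graph_def k_word_representable_empty)

lemma all_edges_in_kword_graphs: "all_edges n \<in> kword_graphs k n"
  by (simp add: kword_graphs_def is_graph_def k_word_representable_all_edges)

lemma finite_values_on_graphs: "finite {f G | G. is_graph n G \<and> P G}"
proof -
  have "{f G | G. is_graph n G \<and> P G} \<subseteq> f ` Pow (all_edges n)"
    by (auto simp: is_graph_def)
  then show ?thesis using finite_all_edges finite_subset by blast
qed

lemma finite_kword_graphs: "finite (kword_graphs k n)"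
  using finite_values_on_graphs[of "\<lambda>G. G" n "k_word_representable k n"] by (simp add: kword_graphs_def)

lemma dist_kword_eq_Min: "dist_kword k n G = Min (gdist n G ` kword_graphs k n)"
  unfolding dist_kword_def kword_graphs_def by (rule arg_cong[where f = Min]) auto

lemma dist_kword_le_gdist: "H \<in> kword_graphs k n \<Longrightarrow> dist_kword k n G \<le> gdist n G H"
  unfolding dist_kword_eq_Min using finite_kword_graphs by simp

lemma dist_kword_geI:
  assumes "k \<ge> 2" "\<And>H. H \<in> kword_graphs k n \<Longrightarrow> b \<le> gdist n G H"
  shows "b \<le> dist_kword k n G"
  unfolding dist_kword_eq_Min using finite_kword_graphs empty_in_kword_graphs[OF assms(1)] assms(2)
  by (subst Min_ge_iff) blast+

lemma dist_kword_le_density: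
  assumes "k \<ge> 2" "is_graph n G"
  shows "dist_kword k n G \<le> real (card G) / real (n choose 2)"
  using dist_kword_le_gdist[OF empty_in_kword_graphs[OF assms(1)]] by (simp add: gdist_def)

lemma dist_kword_le_co_density:
  assumes "is_graph n G"
  shows "dist_kword k n G \<le> 1 - real (card G) / real (n choose 2)"
proof -
  have G: "G \<subseteq> all_edges n" using assms by (simp add: is_graph_def)
  have "dist_kword k n G \<le> gdist n G (all_edges n)"
    by (rule dist_kword_le_gdist[OF all_edges_in_kword_graphs])
  also have "\<dots> = real ((n choose 2) - card G) / real (n choose 2)"
  proof -
    have "G - all_edges n \<union> (all_edges n - G) = all_edges n - G" using G by auto
    then show ?thesis
      using G finite_all_edges by (simp add: gdist_def card_Diff_subset card_all_edges finite_subset)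
  qed
  also have "\<dots> \<le> 1 - real (card G) / real (n choose 2)"
    using card_graph_le[OF assms] by (cases "n choose 2 = 0") (simp_all add: of_nat_diff diff_divide_distrib)
  finally show ?thesis .
qed

text \<open>A k-word-representable graph is determined by a representing word, of length k n.\<close>

lemma card_kword_graphs_le: "card (kword_graphs k n) \<le> n ^ (k * n)"
proof -
  define W where "W = {w. set w \<subseteq> {0..<n} \<and> length w = k * n}"
  define graph_of where
    "graph_of w = {{x, y} | x y. x < n \<and> y < n \<and> x \<noteq> y \<and> alternate w x y}" for w
  have "kword_graphs k n \<subseteq> graph_of ` W"
  proof
    fix H assume "H \<in> kword_graphs k n"
    then obtain w where w: "word_represents w n H" "\<forall>v<n. count_list w v = k" "is_graph n H"
      by (auto simp: kword_graphs_def k_word_representable_def)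
    have sw: "set w \<subseteq> {0..<n}" using w(1) by (simp add: word_represents_def)
    have "length w = (\<Sum>v\<in>{0..<n}. count_list w v)" using sum_count_set[OF sw] by simp
    also have "\<dots> = k * n" using w(2) by simp
    finally have "w \<in> W" using sw by (simp add: W_def)
    moreover have "H = graph_of w"
    proof (intro set_eqI iffI)
      fix e assume "e \<in> H"
      then obtain x y where "e = {x, y}" "x < n" "y < n" "x \<noteq> y"
        using w(3) by (auto simp: is_graph_def all_edges_def)
      then show "e \<in> graph_of w"
        using w(1) \<open>e \<in> H\<close> unfolding graph_of_def word_represents_def by blast
    qed (use w(1) in \<open>auto simp: graph_of_def word_represents_def\<close>)
    ultimately show "H \<in> graph_of ` W" by blast
  qed
  moreover have "finite W" unfolding W_def by (rule finite_lists_length_eq) simp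
  ultimately have "card (kword_graphs k n) \<le> card W"
    by (meson card_image_le card_mono finite_imageI order_trans)
  also have "card W = n ^ (k * n)" by (simp add: W_def card_lists_length_eq)
  finally show ?thesis .
qed

section \<open>A hypergeometric tail bound\<close>

definition hypergeometric_count :: "nat \<Rightarrow> nat \<Rightarrow> nat \<Rightarrow> nat \<Rightarrow> nat" where
  "hypergeometric_count N h m j = (h choose j) * ((N - h) choose (m - j))"

lemma card_subsets_Int_eq_le:
  assumes "finite A" "H \<subseteq> A"
  shows "card {G. G \<subseteq> A \<and> card G = m \<and> card (G \<inter> H) = j}
           \<le> hypergeometric_count (card A) (card H) m j"
proof -
  let ?S = "{G. G \<subseteq> A \<and> card G = m \<and> card (G \<inter> H) = j}"
  let ?X = "{X. X \<subseteq> H \<and> card X = j}"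
  let ?Y = "{Y. Y \<subseteq> A - H \<and> card Y = m - j}"
  have fH: "finite H" using assms finite_subset by blast
  have "inj_on (\<lambda>G. (G \<inter> H, G - H)) ?S" by (rule inj_onI) auto
  moreover have "(\<lambda>G. (G \<inter> H, G - H)) ` ?S \<subseteq> ?X \<times> ?Y"
  proof (rule image_subsetI)
    fix G assume G: "G \<in> ?S"
    then have "card (G - H) = m - j"
      using card_Int_Diff[of G H] assms(1) finite_subset by fastforce
    then show "(G \<inter> H, G - H) \<in> ?X \<times> ?Y" using G by auto
  qed
  ultimately have "card ?S \<le> card (?X \<times> ?Y)"
    by (rule card_inj_on_le) (use assms fH in \<open>auto intro: finite_cartesian_product\<close>)
  also have "\<dots> = card ?X * card ?Y" by (rule card_cartesian_product)
  also have "\<dots> = hypergeometric_count (card A) (card H) m j"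
    using n_subsets[OF fH, of j] n_subsets[of "A - H" "m - j"] assms
    by (simp add: hypergeometric_count_def card_Diff_subset fH)
  finally show ?thesis .
qed

lemma hypergeometric_count_le_choose:
  assumes "h \<le> N" "j \<le> m"
  shows "hypergeometric_count N h m j \<le> N choose m"
proof -
  have "hypergeometric_count N h m j \<le> (\<Sum>i\<le>m. (h choose i) * ((N - h) choose (m - i)))"
    unfolding hypergeometric_count_def by (rule member_le_sum) (use assms in auto)
  also have "\<dots> = N choose m" using vandermonde[of h "N - h" m] assms by simp
  finally show ?thesis .
qed

lemma Suc_mult_choose_Suc: "Suc k * (n choose Suc k) = (n - k) * (n choose k)"
  by (metis binomial_absorption binomial_absorb_comp)

lemma hypergeometric_count_Suc:
  assumes "j < m"
  shows "Suc j * (N - h - (m - Suc j)) * hypergeometric_count N h m (Suc j)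
           = (h - j) * (m - j) * hypergeometric_count N h m j"
proof -
  have mj: "m - j = Suc (m - Suc j)" using assms by simp
  have "Suc j * (N - h - (m - Suc j)) * hypergeometric_count N h m (Suc j)
      = (Suc j * (h choose Suc j)) * ((N - h - (m - Suc j)) * ((N - h) choose (m - Suc j)))"
    by (simp only: hypergeometric_count_def mult_ac)
  also have "\<dots> = ((h - j) * (h choose j)) * (Suc (m - Suc j) * ((N - h) choose Suc (m - Suc j)))"
    by (simp only: Suc_mult_choose_Suc)
  also have "\<dots> = (h - j) * (m - j) * hypergeometric_count N h m j"
    by (simp only: hypergeometric_count_def mj mult_ac)
  finally show ?thesis .
qed

lemma mult_div_ge_add_diff:
  fixes h m N :: real
  assumes "0 < N" "h \<le> N" "m \<le> N"
  shows "h + m - N \<le> h * m / N"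
proof -
  have "0 \<le> (N - h) * (N - m)" using assms by simp
  then have "(h + m - N) * N \<le> h * m" by (simp add: algebra_simps)
  then show ?thesis using assms(1) by (simp add: pos_le_divide_eq)
qed

text \<open>The ratio of consecutive hypergeometric terms is (h - j)(m - j) / ((j + 1)(N - h - m + j + 1)),
which is at most 1 - s/N once j exceeds the mean h m / N by s.\<close>

lemma hypergeometric_ratio_le:
  fixes h m N j s :: real
  assumes "j + 1 \<le> h" "j + 1 \<le> m" "h \<le> N" "m \<le> N" "0 \<le> j" "0 \<le> s"
    and "h * m / N + s \<le> j"
  shows "(h - j) * (m - j) \<le> (1 - s / N) * ((j + 1) * (N - h - m + j + 1))"
proof -
  define D where "D = (j + 1) * (N - h - m + j + 1)"
  have N: "0 < N" using assms by linarith
  have "h + m - N \<le> j" using mult_div_ge_add_diff[OF N assms(3,4)] assms(6,7) by linarith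
  then have D_ge: "j * (N - h - m + j) \<le> D" using assms(5) by (simp add: D_def algebra_simps)
  have "h * m \<le> (j - s) * N" using assms(7) N by (simp add: field_simps)
  then have "(h - j) * (m - j) \<le> j * (N - h - m + j) - s * N" by (simp add: algebra_simps)
  moreover have "s / N * D \<le> s * N"
  proof -
    have "D \<le> N * N"
      unfolding D_def using assms \<open>h + m - N \<le> j\<close> by (intro mult_mono) auto
    then have "s / N * D \<le> s / N * (N * N)" using assms(6) N by (intro mult_left_mono) auto
    then show ?thesis using N by simp
  qed
  moreover have "(1 - s / N) * D = D - s / N * D" by (simp add: algebra_simps)
  ultimately show ?thesis using D_ge unfolding D_def[symmetric] by linarith
qed

lemma hypergeometric_count_Suc_le:
  assumes "h \<le> N" "m \<le> N" "0 \<le> s" "j < m"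
    and "real h * real m / real N + s \<le> real j"
  shows "real (hypergeometric_count N h m (Suc j)) \<le> (1 - s / real N) * real (hypergeometric_count N h m j)"
proof -
  have N: "real N > 0" using assms by simp
  have "0 \<le> real h * real m / real N" by simp
  moreover have "real j < real N" using assms by simp
  ultimately have "s \<le> real N" using assms(5) by linarith
  then have ratio_ge0: "0 \<le> 1 - s / real N" using N by simp
  show ?thesis
  proof (cases "Suc j \<le> h")
    case False
    then show ?thesis using ratio_ge0 by (simp add: hypergeometric_count_def binomial_eq_0)
  next
    case True
    define D where "D = (real j + 1) * (real N - real h - real m + real j + 1)"
    have "real h + real m - real N \<le> real j"
      using mult_div_ge_add_diff[OF N, of "real h" "real m"] assms by linarith
    then have "real (N - h - (m - Suc j)) = real N - real h - real m + real j + 1"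
      using assms by (simp add: of_nat_diff)
    moreover have "real (h - j) = real h - real j" "real (m - j) = real m - real j"
      using True assms(4) by (simp_all add: of_nat_diff)
    ultimately have "D * real (hypergeometric_count N h m (Suc j))
        = (real h - real j) * (real m - real j) * real (hypergeometric_count N h m j)"
      using arg_cong[OF hypergeometric_count_Suc[OF assms(4), of N h], of real]
      unfolding D_def of_nat_mult by (simp add: add.commute)
    also have "\<dots> \<le> (1 - s / real N) * D * real (hypergeometric_count N h m j)"
      using hypergeometric_ratio_le[of "real j" "real h" "real m" "real N" s] True assms
      unfolding D_def by (intro mult_right_mono) simp_all
    finally have "D * real (hypergeometric_count N h m (Suc j))
        \<le> D * ((1 - s / real N) * real (hypergeometric_count N h m j))"
      by (simp only: mult_ac)
    moreover have "D > 0"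
      unfolding D_def using \<open>real h + real m - real N \<le> real j\<close> by simp
    ultimately show ?thesis by simp
  qed
qed

lemma hypergeometric_count_tail:
  assumes "h \<le> N" "m \<le> N" "0 \<le> s" "j0 + i \<le> m"
    and "real h * real m / real N + s \<le> real j0"
  shows "real (hypergeometric_count N h m (j0 + i)) \<le> exp (- s / real N * real i) * real (N choose m)"
  using assms(4)
proof (induction i)
  case 0
  then show ?case using hypergeometric_count_le_choose[OF assms(1), of j0 m] by simp
next
  case (Suc i)
  have "s \<le> real N" using assms Suc.prems by (smt (verit) divide_nonneg_nonneg of_nat_0_le_iff of_nat_add of_nat_mono mult_nonneg_nonneg)
  then have ratio: "0 \<le> 1 - s / real N" "1 - s / real N \<le> exp (- s / real N)"
    using exp_ge_add_one_self[of "- s / real N"] by (auto simp: divide_le_eq_1)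
  have "real (hypergeometric_count N h m (Suc (j0 + i)))
      \<le> (1 - s / real N) * real (hypergeometric_count N h m (j0 + i))"
    by (rule hypergeometric_count_Suc_le) (use assms Suc.prems in auto)
  also have "\<dots> \<le> exp (- s / real N) * (exp (- s / real N * real i) * real (N choose m))"
    using Suc ratio by (intro mult_mono) auto
  also have "\<dots> = exp (- s / real N + - s / real N * real i) * real (N choose m)"
    by (simp only: exp_add mult.assoc)
  also have "\<dots> = exp (- s / real N * real (Suc i)) * real (N choose m)"
    by (simp add: distrib_left)
  finally show ?case by simp
qed

lemma card_upper_tail_le:
  assumes "finite A" "card A > 0" "H \<subseteq> A" "m \<le> card A" "0 < e"
  shows "real (card {G. G \<subseteq> A \<and> card G = m \<and>
             real (card H) * real m / real (card A) + 2 * e * real (card A) \<le> real (card (G \<inter> H))})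
         \<le> real (m + 1) * exp (- e * (e * real (card A) - 1)) * real (card A choose m)"
proof -
  define N h where "N = card A" and "h = card H"
  define mu s where "mu = real h * real m / real N" and "s = e * real N"
  define j0 where "j0 = nat \<lceil>mu + s\<rceil>"
  define J where "J = {j. j \<le> m \<and> mu + 2 * s \<le> real j}"
  define slice where "slice j = {G. G \<subseteq> A \<and> card G = m \<and> card (G \<inter> H) = j}" for j
  have N: "real N > 0" using assms by (simp add: N_def)
  have "h \<le> N" unfolding h_def N_def using assms by (simp add: card_mono)
  have "mu \<ge> 0" "s \<ge> 0" using assms by (simp_all add: mu_def s_def N_def)
  then have j0: "mu + s \<le> real j0" "real j0 < mu + s + 1" unfolding j0_def by linarith+
  have slice_le: "real (card (slice j)) \<le> exp (- e * (s - 1)) * real (N choose m)" if "j \<in> J" for j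
  proof -
    have j: "j \<le> m" "mu + 2 * s \<le> real j" using that by (auto simp: J_def)
    then have "real j0 < real j + 1" using j0 \<open>s \<ge> 0\<close> by linarith
    then have "j0 \<le> j" by simp
    have "real (card (slice j)) \<le> real (hypergeometric_count N h m j)"
      using card_subsets_Int_eq_le[OF assms(1,3)] by (simp add: slice_def N_def h_def)
    also have "\<dots> \<le> exp (- s / real N * real (j - j0)) * real (N choose m)"
      using hypergeometric_count_tail[of h N m s j0 "j - j0"] \<open>h \<le> N\<close> \<open>s \<ge> 0\<close> \<open>j0 \<le> j\<close> j j0 assms(4)
      by (simp add: N_def mu_def)
    also have "\<dots> \<le> exp (- e * (s - 1)) * real (N choose m)"
    proof -
      have "s / real N = e" using N by (simp add: s_def)
      moreover have "s - 1 \<le> real (j - j0)" using j j0 \<open>j0 \<le> j\<close> by (simp add: of_nat_diff)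
      ultimately show ?thesis using assms(5) by (intro mult_right_mono) auto
    qed
    finally show ?thesis .
  qed
  have "{G. G \<subseteq> A \<and> card G = m \<and> mu + 2 * s \<le> real (card (G \<inter> H))} \<subseteq> (\<Union>j\<in>J. slice j)"
  proof
    fix G assume "G \<in> {G. G \<subseteq> A \<and> card G = m \<and> mu + 2 * s \<le> real (card (G \<inter> H))}"
    then have G: "G \<subseteq> A" "card G = m" "mu + 2 * s \<le> real (card (G \<inter> H))" by auto
    have "card (G \<inter> H) \<le> card G" using G assms(1) by (meson card_mono finite_subset inf_le1)
    then show "G \<in> (\<Union>j\<in>J. slice j)" using G by (auto simp: J_def slice_def)
  qed
  moreover have "finite J" by (rule finite_subset[of _ "{..m}"]) (auto simp: J_def)
  moreover have "slice j \<subseteq> Pow A" for j by (auto simp: slice_def)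
  then have "finite (slice j)" for j using assms(1) by (meson finite_Pow_iff finite_subset)
  ultimately have "card {G. G \<subseteq> A \<and> card G = m \<and> mu + 2 * s \<le> real (card (G \<inter> H))}
      \<le> card (\<Union>j\<in>J. slice j)"
    by (intro card_mono) auto
  also have "\<dots> \<le> (\<Sum>j\<in>J. card (slice j))" by (rule card_UN_le[OF \<open>finite J\<close>])
  finally have "card {G. G \<subseteq> A \<and> card G = m \<and> mu + 2 * s \<le> real (card (G \<inter> H))}
      \<le> (\<Sum>j\<in>J. card (slice j))" .
  then have "real (card {G. G \<subseteq> A \<and> card G = m \<and> mu + 2 * s \<le> real (card (G \<inter> H))})
      \<le> (\<Sum>j\<in>J. real (card (slice j)))"
    by (simp flip: of_nat_sum)
  also have "\<dots> \<le> (\<Sum>j\<in>J. exp (- e * (s - 1)) * real (N choose m))"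
    by (rule sum_mono) (rule slice_le)
  also have "\<dots> \<le> real (m + 1) * (exp (- e * (s - 1)) * real (N choose m))"
  proof -
    have "card J \<le> card {0..m}" by (rule card_mono) (auto simp: J_def)
    then show ?thesis by (simp add: mult_right_mono)
  qed
  finally show ?thesis by (simp add: N_def h_def mu_def s_def mult.assoc)
qed

lemma exists_subset_below_upper_tails:
  assumes "finite A" "card A > 0" "m \<le> card A" "0 < e"
    and "finite \<H>" "\<And>H. H \<in> \<H> \<Longrightarrow> H \<subseteq> A"
    and "real (card \<H>) * real (card A + 1) * exp (- e * (e * real (card A) - 1)) < 1"
  shows "\<exists>G. G \<subseteq> A \<and> card G = m \<and>
           (\<forall>H\<in>\<H>. real (card (G \<inter> H)) < real (card H) * real m / real (card A) + 2 * e * real (card A))"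
proof -
  define N where "N = card A"
  define q where "q = exp (- e * (e * real N - 1))"
  define tail where "tail H = {G. G \<subseteq> A \<and> card G = m \<and>
      real (card H) * real m / real N + 2 * e * real N \<le> real (card (G \<inter> H))}" for H
  have "tail H \<subseteq> Pow A" for H by (auto simp: tail_def)
  then have "finite (tail H)" for H using assms(1) by (meson finite_Pow_iff finite_subset)
  then have "real (card (\<Union>H\<in>\<H>. tail H)) \<le> (\<Sum>H\<in>\<H>. real (card (tail H)))"
    using card_UN_le[OF assms(5), of tail] by (simp flip: of_nat_sum)
  also have "\<dots> \<le> (\<Sum>H\<in>\<H>. real (N + 1) * q * real (N choose m))"
  proof (rule sum_mono)
    fix H assume "H \<in> \<H>"
    then have "H \<subseteq> A" by (rule assms(6))
    then have "real (card (tail H)) \<le> real (m + 1) * q * real (N choose m)"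
      unfolding tail_def q_def N_def by (rule card_upper_tail_le[OF assms(1,2) _ assms(3,4)])
    also have "\<dots> \<le> real (N + 1) * q * real (N choose m)"
      using assms(3) by (intro mult_right_mono) (auto simp: N_def q_def)
    finally show "real (card (tail H)) \<le> real (N + 1) * q * real (N choose m)" .
  qed
  also have "\<dots> = real (card \<H>) * real (N + 1) * q * real (N choose m)" by simp
  also have "\<dots> < real (N choose m)"
  proof -
    have "0 < real (N choose m)" using assms(3) by (simp add: N_def)
    from mult_strict_right_mono[OF assms(7) this] show ?thesis by (simp add: N_def q_def)
  qed
  also have "\<dots> = real (card {G. G \<subseteq> A \<and> card G = m})"
    using n_subsets[OF assms(1)] by (simp add: N_def)
  finally have lt: "card (\<Union>H\<in>\<H>. tail H) < card {G. G \<subseteq> A \<and> card G = m}"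
    by simp
  have "\<not> {G. G \<subseteq> A \<and> card G = m} \<subseteq> (\<Union>H\<in>\<H>. tail H)"
  proof
    assume "{G. G \<subseteq> A \<and> card G = m} \<subseteq> (\<Union>H\<in>\<H>. tail H)"
    then have "card {G. G \<subseteq> A \<and> card G = m} \<le> card (\<Union>H\<in>\<H>. tail H)"
      by (intro card_mono) (use assms(5) \<open>\<And>H. finite (tail H)\<close> in auto)
    with lt show False by simp
  qed
  then show ?thesis by (auto simp: tail_def N_def not_le)
qed

section \<open>Graphs far from every k-word-representable graph\<close>

lemma min_le_add_diff_mult_div:
  fixes h m N :: real
  assumes "0 \<le> h" "h \<le> N" "0 \<le> m" "N > 0"
  shows "min m (N - m) \<le> m + h - 2 * h * m / N"
proof -
  have eq: "m + h - 2 * h * m / N = m + h * (N - 2 * m) / N" using assms by (simp add: field_simps)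
  show ?thesis
  proof (cases "N - 2 * m \<ge> 0")
    case True
    then have "h * (N - 2 * m) / N \<ge> 0" using assms by simp
    then show ?thesis using eq by linarith
  next
    case False
    then have "h * (N - 2 * m) \<ge> N * (N - 2 * m)" using assms by (intro mult_right_mono_neg) auto
    then have "h * (N - 2 * m) / N \<ge> N - 2 * m" using assms by (simp add: pos_le_divide_eq mult.commute)
    then show ?thesis using eq by linarith
  qed
qed

lemma gdist_ge_if_card_Int_small:
  assumes "is_graph n G" "is_graph n H" "n \<ge> 2"
    and "real (card (G \<inter> H)) < real (card H) * real (card G) / real (n choose 2) + 2 * e * real (n choose 2)"
  shows "min (real (card G)) (real (n choose 2) - real (card G)) / real (n choose 2) - 4 * e \<le> gdist n G H"
proof -
  define N where "N = real (n choose 2)"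
  have N: "N > 0" using assms(3) by (simp add: N_def)
  have "finite G" "finite H"
    using assms(1,2) finite_all_edges finite_subset unfolding is_graph_def by blast+
  then have "real (card (G - H \<union> (H - G))) = real (card G) + real (card H) - 2 * real (card (G \<inter> H))"
    using arg_cong[where f = real, OF card_sym_diff[OF \<open>finite G\<close> \<open>finite H\<close>]] by simp
  moreover have "min (real (card G)) (N - real (card G))
      \<le> real (card G) + real (card H) - 2 * real (card H) * real (card G) / N"
    using min_le_add_diff_mult_div[OF _ _ _ N] card_graph_le[OF assms(2)] by (simp add: N_def)
  ultimately have "min (real (card G)) (N - real (card G)) - 4 * e * N \<le> real (card (G - H \<union> (H - G)))"
    using assms(4) by (simp add: N_def)
  then have "(min (real (card G)) (N - real (card G)) - 4 * e * N) / N \<le> gdist n G H"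
    unfolding gdist_def N_def[symmetric] by (rule divide_right_mono) (use N in simp)
  then show ?thesis using N by (simp add: N_def diff_divide_distrib)
qed

lemma exists_graph_far_from_kword_graphs:
  assumes "k \<ge> 2" "n \<ge> 2" "0 < e" "m \<le> n choose 2"
    and "real (n ^ (k * n)) * real ((n choose 2) + 1) * exp (- e * (e * real (n choose 2) - 1)) < 1"
  shows "\<exists>G. is_graph n G \<and> card G = m \<and>
           min (real m) (real (n choose 2) - real m) / real (n choose 2) - 4 * e \<le> dist_kword k n G"
proof -
  have "real (card (kword_graphs k n)) * real (card (all_edges n) + 1) * exp (- e * (e * real (card (all_edges n)) - 1))
      \<le> real (n ^ (k * n)) * real ((n choose 2) + 1) * exp (- e * (e * real (n choose 2) - 1))"
    using card_kword_graphs_le[of k n] by (simp add: card_all_edges)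
  with assms(5) have "real (card (kword_graphs k n)) * real (card (all_edges n) + 1)
      * exp (- e * (e * real (card (all_edges n)) - 1)) < 1" by linarith
  moreover have "\<And>H. H \<in> kword_graphs k n \<Longrightarrow> H \<subseteq> all_edges n"
    by (simp add: kword_graphs_def is_graph_def)
  ultimately have "\<exists>G. G \<subseteq> all_edges n \<and> card G = m \<and> (\<forall>H\<in>kword_graphs k n.
      real (card (G \<inter> H)) < real (card H) * real m / real (card (all_edges n)) + 2 * e * real (card (all_edges n)))"
    using exists_subset_below_upper_tails[OF finite_all_edges _ _ assms(3) finite_kword_graphs] assms(2,4)
    by (simp add: card_all_edges)
  then obtain G where G: "G \<subseteq> all_edges n" "card G = m"
    "\<And>H. H \<in> kword_graphs k n \<Longrightarrow> real (card (G \<inter> H))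
       < real (card H) * real m / real (n choose 2) + 2 * e * real (n choose 2)"
    by (auto simp: card_all_edges)
  have "is_graph n G" using G(1) by (simp add: is_graph_def)
  moreover have "min (real m) (real (n choose 2) - real m) / real (n choose 2) - 4 * e \<le> dist_kword k n G"
    using gdist_ge_if_card_Int_small[OF \<open>is_graph n G\<close> _ assms(2)] G(2,3)
    by (intro dist_kword_geI[OF assms(1)]) (auto simp: kword_graphs_def)
  ultimately show ?thesis using G(2) by blast
qed

lemma eventually_union_bound_lt_1:
  assumes "0 < e"
  shows "\<forall>\<^sub>F n in sequentially.
           real (n ^ (k * n)) * real ((n choose 2) + 1) * exp (- e * (e * real (n choose 2) - 1)) < 1"
proof -
  have "filterlim (\<lambda>n::nat. e * (e * (real n * (real n - 1) / 2) - 1) - real k * real n * ln (real n)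
      - ln (real n * (real n - 1) / 2 + 1)) at_top sequentially"
    using assms by real_asymp
  then have "\<forall>\<^sub>F n in sequentially. 0 < e * (e * real (n choose 2) - 1) - real k * real n * ln (real n)
      - ln (real (n choose 2) + 1)"
    unfolding real_choose_two filterlim_at_top_dense by blast
  then show ?thesis using eventually_gt_at_top[of 0]
  proof eventually_elim
    case (elim n)
    have "real (n ^ (k * n)) = exp (ln (real n)) ^ (k * n)" using elim(2) by simp
    also have "\<dots> = exp (real k * real n * ln (real n))" by (simp add: exp_of_nat_mult[symmetric])
    finally have "real (n ^ (k * n)) = exp (real k * real n * ln (real n))" .
    moreover have "real ((n choose 2) + 1) = exp (ln (real (n choose 2) + 1))" by simp
    ultimately have "real (n ^ (k * n)) * real ((n choose 2) + 1) * exp (- e * (e * real (n choose 2) - 1))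
        = exp (real k * real n * ln (real n)) * exp (ln (real (n choose 2) + 1))
            * exp (- e * (e * real (n choose 2) - 1))"
      by (simp only:)
    also have "\<dots> = exp (- (e * (e * real (n choose 2) - 1) - real k * real n * ln (real n)
        - ln (real (n choose 2) + 1)))"
      unfolding mult_exp_exp by (rule arg_cong[where f = exp]) (simp add: algebra_simps)
    finally show ?case using elim(1) by simp
  qed
qed

section \<open>Asymptotics of the extremal distance\<close>

lemma exists_graph_with_card: "m \<le> n choose 2 \<Longrightarrow> \<exists>G. is_graph n G \<and> card G = m"
  using obtain_subset_with_card_n[of m "all_edges n"] by (metis card_all_edges is_graph_def)

lemma min_floor_density_approx:
  fixes p :: real
  assumes "0 \<le> p" "p \<le> 1" "0 < N"
  defines "m \<equiv> nat \<lfloor>p * real N\<rfloor>"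
  shows "m \<le> N"
    and "\<bar>min (real m) (real N - real m) / real N - min p (1 - p)\<bar> \<le> 1 / real N"
proof -
  have "0 \<le> p * real N" using assms by simp
  then have m: "real m \<le> p * real N" "p * real N - 1 < real m" unfolding m_def by linarith+
  moreover have "p * real N \<le> real N" using assms by (simp add: mult_left_le_one_le)
  ultimately show "m \<le> N" by linarith
  have "min (real m) (real N - real m) / real N = min (real m / real N) (1 - real m / real N)"
    using assms(3) by (simp add: min_divide_distrib_right diff_divide_distrib)
  moreover have "(p * real N - 1) / real N < real m / real N"
    using m(2) assms(3) by (intro divide_strict_right_mono) auto
  then have "p - 1 / real N < real m / real N"
    using assms(3) by (simp add: diff_divide_distrib)
  moreover have "real m / real N \<le> p"
    using m(1) assms(3) by (simp add: pos_divide_le_eq)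
  ultimately show "\<bar>min (real m) (real N - real m) / real N - min p (1 - p)\<bar> \<le> 1 / real N"
    by (simp add: abs_le_iff min_def)
qed

lemma dist_kword_le_min_density:
  assumes "k \<ge> 2" "is_graph n G"
  shows "dist_kword k n G \<le> min (real (card G)) (real (n choose 2) - real (card G)) / real (n choose 2)"
proof (cases "real (n choose 2) = 0")
  case True
  show ?thesis using dist_kword_le_density[OF assms] unfolding True by simp
next
  case False
  then show ?thesis using dist_kword_le_density[OF assms] dist_kword_le_co_density[OF assms(2), of k]
    by (simp add: min_divide_distrib_right diff_divide_distrib)
qed

lemma max_dist_density_le:
  assumes "k \<ge> 2" "n \<ge> 2" "0 \<le> p" "p \<le> 1"
  shows "max_dist_density k p n \<le> min p (1 - p) + 1 / real (n choose 2)"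
proof -
  define N m where "N = n choose 2" and "m = nat \<lfloor>p * real N\<rfloor>"
  have "0 < N" using assms(2) by (simp add: N_def)
  note approx = min_floor_density_approx[OF assms(3,4) this, folded m_def]
  have "\<forall>d \<in> {dist_kword k n G | G. is_graph n G \<and> card G = m}. d \<le> min p (1 - p) + 1 / real N"
    using dist_kword_le_min_density[OF assms(1)] approx(2) by (force simp: N_def abs_le_iff)
  moreover have "{dist_kword k n G | G. is_graph n G \<and> card G = m} \<noteq> {}"
    using exists_graph_with_card[OF approx(1)[unfolded N_def]] by auto
  ultimately show ?thesis
    unfolding max_dist_density_def N_def[symmetric] m_def[symmetric] using finite_values_on_graphs
    by (subst Max_le_iff) auto
qed

lemma max_dist_density_ge:
  assumes "k \<ge> 2" "n \<ge> 2" "0 \<le> p" "p \<le> 1" "0 < e"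
    and "real (n ^ (k * n)) * real ((n choose 2) + 1) * exp (- e * (e * real (n choose 2) - 1)) < 1"
  shows "min p (1 - p) - 1 / real (n choose 2) - 4 * e \<le> max_dist_density k p n"
proof -
  define N m where "N = n choose 2" and "m = nat \<lfloor>p * real N\<rfloor>"
  have "0 < N" using assms(2) by (simp add: N_def)
  note approx = min_floor_density_approx[OF assms(3,4) this, folded m_def]
  obtain G where G: "is_graph n G" "card G = m"
    "min (real m) (real N - real m) / real N - 4 * e \<le> dist_kword k n G"
    using exists_graph_far_from_kword_graphs[OF assms(1,2,5) approx(1)[unfolded N_def] assms(6)]
    by (auto simp: N_def)
  have "dist_kword k n G \<le> max_dist_density k p n"
    unfolding max_dist_density_def N_def[symmetric] m_def[symmetric]
    using G(1,2) finite_values_on_graphs by (intro Max_ge) auto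
  then show ?thesis using G(3) approx(2) by (simp add: N_def abs_le_iff)
qed

lemma max_dist_density_tendsto:
  assumes "k \<ge> 2" "0 \<le> p" "p \<le> 1"
  shows "max_dist_density k p \<longlonglongrightarrow> min p (1 - p)"
proof (rule tendstoI)
  fix r :: real assume "r > 0"
  define e where "e = r / 16"
  have "0 < e" using \<open>r > 0\<close> by (simp add: e_def)
  have "(\<lambda>n. 1 / real (n choose 2)) \<longlonglongrightarrow> 0"
    unfolding real_choose_two by real_asymp
  then have "\<forall>\<^sub>F n in sequentially. 1 / real (n choose 2) < r / 2"
    by (rule order_tendstoD(2)) (use \<open>r > 0\<close> in simp)
  then show "\<forall>\<^sub>F n in sequentially. dist (max_dist_density k p n) (min p (1 - p)) < r"
    using eventually_ge_at_top[of 2] eventually_union_bound_lt_1[OF \<open>0 < e\<close>, of k]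
  proof eventually_elim
    case (elim n)
    then show ?case
      using max_dist_density_le[OF assms(1) elim(2) assms(2,3)]
        max_dist_density_ge[OF assms(1) elim(2) assms(2,3) \<open>0 < e\<close> elim(3)]
      by (simp add: dist_real_def abs_less_iff e_def)
  qed
qed

lemma max_dist_tendsto:
  assumes "k \<ge> 2"
  shows "max_dist k \<longlonglongrightarrow> 1 / 2"
proof -
  have fin: "finite {dist_kword k n G | G. is_graph n G}" for n
    using finite_values_on_graphs[of "dist_kword k n" n "\<lambda>_. True"] by simp
  have "\<forall>\<^sub>F n in sequentially. max_dist_density k (1 / 2) n \<le> max_dist k n"
    using eventually_ge_at_top[of 2]
  proof eventually_elim
    case (elim n)
    then have "nat \<lfloor>1 / 2 * real (n choose 2)\<rfloor> \<le> n choose 2"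
      using min_floor_density_approx(1)[of "1 / 2" "n choose 2"] by simp
    then show ?case
      unfolding max_dist_density_def max_dist_def
      using exists_graph_with_card fin by (intro Max_mono) auto
  qed
  moreover have "\<forall>\<^sub>F n in sequentially. max_dist k n \<le> 1 / 2"
  proof (rule always_eventually, rule allI)
    fix n
    have "dist_kword k n G \<le> 1 / 2" if "is_graph n G" for G
      using dist_kword_le_density[OF assms that] dist_kword_le_co_density[OF that, of k] by linarith
    moreover have "is_graph n {}" by (simp add: is_graph_def)
    ultimately show "max_dist k n \<le> 1 / 2"
      unfolding max_dist_def using fin by (subst Max_le_iff) auto
  qed
  moreover have "max_dist_density k (1 / 2) \<longlonglongrightarrow> 1 / 2"
    using max_dist_density_tendsto[OF assms, of "1 / 2"] by simp
  ultimately show ?thesis by (rule tendsto_sandwich) simp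
qed

lemma edge_density_near_half_if_far:
  assumes "k \<ge> 2" "is_graph n G" "1 / 2 - \<epsilon> \<le> dist_kword k n G"
  shows "1 / 2 - \<epsilon> \<le> real (card G) / real (n choose 2)"
    and "real (card G) / real (n choose 2) \<le> 1 / 2 + \<epsilon>"
  using dist_kword_le_density[OF assms(1,2)] dist_kword_le_co_density[OF assms(2), of k] assms(3)
  by linarith+

theorem mainTheorem2:
  fixes k :: nat
  assumes "k \<ge> 2"
  shows "(\<forall>p::real. 0 \<le> p \<and> p \<le> 1 \<longrightarrow>
           (max_dist_density k p \<longlonglongrightarrow> min p (1 - p)))
       \<and> (max_dist k \<longlonglongrightarrow> 1 / 2)
       \<and> (\<forall>\<epsilon>::real. \<epsilon> > 0 \<longrightarrow>
           (\<forall>n G. n \<ge> 2 \<and> is_graph n G \<and> dist_kword k n G \<ge> 1 / 2 - \<epsilon> \<longrightarrow>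
              1 / 2 - \<epsilon> \<le> real (card G) / real (n choose 2) \<and>
              real (card G) / real (n choose 2) \<le> 1 / 2 + \<epsilon>))"
  using max_dist_density_tendsto[OF assms] max_dist_tendsto[OF assms]
    edge_density_near_half_if_far[OF assms]
  by blast

end
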